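(* Let $k\ge0$. Assume $\nabla_x f$ exists on $X\times Y$ and $\|\nabla_x f(x',y')-\nabla_x f(x,y)\|\le\lambda\|x'-x\|+\mu\|y'-y\|$ for all $x,x'\in X,y,y'\in Y$ (possibly with $\mu=\infty$). If $k\ge1$, assume moreover: $\nabla^{k+1}_{xy\cdots y}f$ exists and $\|\nabla^{k+1}_{xy\cdots y}f(x',y)-\nabla^{k+1}_{xy\cdots y}f(x,y)\|\le\tau_k\|x'-x\|$ for all $x,x'\in X$, $y\in Y$; the set $\{(x,y):x\in X,\,y\in Y'_x\}$ is Lebesgue measurable, where $Y'_x$ is the set of $y\in Y$ at which $\nabla^{k+2}_{xxy\cdots y}f(x,y)$ does not exist; and $\nabla^k_{y\cdots y}f(x,\cdot)$ is continuous for all $x\in X$. Then for every $\hat y\in Y$ and every $y\in Y$, the map $x\mapsto\nabla_x\hat f_k(x,y)$ is $\bar\lambda_k$-Lipschitz on $X$, where $$\bar\lambda_k=\lambda+\frac{2\tau_k\mathsf D^k}{k!}\mathbb 1\{k\ge1\}.$$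
   Context: Let $E_x,E_y$ be finite-dimensional Euclidean spaces with Euclidean norms; for tensors $\|\cdot\|$ is the induced operator norm. Let $X\subseteq E_x$, $Y\subseteq E_y$ be convex with nonempty interior, $Y$ compact, $\mathsf D\ge\mathrm{diam}(Y)$, $f:X\times Y\to\mathbb R$. $\nabla^j_{y\cdots y}f$ denotes the tensor of $j$-th order partial derivatives in $y$; $\nabla^{k+1}_{xy\cdots y}f$ and $\nabla^{k+2}_{xxy\cdots y}f$ denote the tensors with $k$ derivatives in $y$ and additionally one, resp. two, derivatives in $x$. For $\hat y\in Y$, $\hat f_k(x,y)=\sum_{j=0}^k\frac1{j!}\nabla^j_{y\cdots y}f(x,\hat y)[(y-\hat y)^j]$, with $T[v^j]=T[v,\dots,v]$. *)

theory Defs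
  imports "HOL-Analysis.Analysis"
begin

text \<open>Tensors: a pure-y tensor of order j is represented as a function on lists of
 vectors of length j (a multilinear form); a mixed tensor with one x-slot and k y-slots
 as a function of type 'a => 'b list => real.  Derivative tensors are related to the
 function through componentwise (within-set) Frechet derivatives, which in finite
 dimensions is equivalent to Frechet differentiability of the tensor-valued map.\<close>

definition mixed_opnorm :: "nat \<Rightarrow> ('a::euclidean_space \<Rightarrow> 'b::euclidean_space list \<Rightarrow> real) \<Rightarrow> real" where
  "mixed_opnorm k T =
     (SUP p \<in> {(u, vs). norm u \<le> 1 \<and> length vs = k \<and> (\<forall>v\<in>set vs. norm v \<le> 1)}.
        \<bar>T (fst p) (snd p)\<bar>)"

definition taylor_y ::
  "(nat \<Rightarrow> 'a \<Rightarrow> 'b::real_vector \<Rightarrow> 'b list \<Rightarrow> real) \<Rightarrow> nat \<Rightarrow> 'b \<Rightarrow> 'a \<Rightarrow> 'b \<Rightarrow> real" where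
  "taylor_y Dy k yhat x y = (\<Sum>j\<le>k. (1 / fact j) * Dy j x yhat (replicate j (y - yhat)))"

text \<open>Y'_x: the points y in Y where the (k+2)-th mixed derivative (second x-derivative
 of the k-th y-derivative, i.e. x-derivative of Dxy) does not exist.\<close>
definition no_xx_deriv ::
  "('a::euclidean_space \<Rightarrow> 'b::euclidean_space \<Rightarrow> 'a \<Rightarrow> 'b list \<Rightarrow> real) \<Rightarrow> 'a set \<Rightarrow> 'b set \<Rightarrow> 'a \<Rightarrow> 'b set" where
  "no_xx_deriv Dxy X Y x =
     {y \<in> Y. \<not> (\<exists>T2 :: 'a \<Rightarrow> 'a \<Rightarrow> 'b list \<Rightarrow> real.
         \<forall>u vs. ((\<lambda>x'. Dxy x' y u vs) has_derivative (\<lambda>w. T2 w u vs)) (at x within X))}"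

end

theory Submission
  imports Defs
begin

(* For k >= 1, Taylor's formula with integral remainder along the segment from yhat to y gives
     fhat_k(x,y) = f(x,y) - R(x) + D_y^k f(x,yhat)[(y-yhat)^k] / k!,
     R(x) = integral over [0,1] of (1-t)^(k-1)/(k-1)! * D_y^k f(x, yhat + t(y-yhat))[(y-yhat)^k] dt.
   The tau_k-Lipschitz bound on the mixed derivative bounds the first-order remainder of
   x |-> D_y^k f(x,z)[w^k] by tau_k |x'-x|^2 |w|^k uniformly in z, which justifies differentiating R
   under the integral sign.  Hence the x-gradient of fhat_k is grad_x f(x,y), minus a kernel average
   of the mixed derivative, plus the boundary term at yhat divided by k!.  The first is lam-Lipschitz,
   and, since the kernel integrates to 1/k!, each of the other two is tau_k |y-yhat|^k / k!-Lipschitz. *)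

section \<open>Derivatives within convex sets\<close>

lemma segment_point_in_convex:
  assumes "convex S" "a \<in> S" "b \<in> S" "t \<in> {0..1}"
  shows "a + t *\<^sub>R (b - a) \<in> S"
proof -
  have "a + t *\<^sub>R (b - a) = (1 - t) *\<^sub>R a + t *\<^sub>R b"
    by (simp add: algebra_simps)
  then show ?thesis
    using assms by (simp add: convexD_alt)
qed

lemma has_derivative_unique_convex:
  fixes f :: "'a::euclidean_space \<Rightarrow> 'b::real_normed_vector"
  assumes S: "convex S" "interior S \<noteq> {}" and x: "x \<in> S"
    and f1: "(f has_derivative f1) (at x within S)" and f2: "(f has_derivative f2) (at x within S)"
  shows "f1 = f2"
proof -
  \<comment> \<open>Restricted to a segment from x into S, the derivative is unique; the directions of these
    segments span the space because S has interior points.\<close>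
  have on_directions: "f1 v = f2 v" if "v \<in> (\<lambda>s. - x + s) ` S" for v
  proof -
    let ?p = "\<lambda>t::real. x + t *\<^sub>R v"
    from that obtain s where s: "s \<in> S" and v: "v = s - x"
      by auto
    have segment: "?p ` {0..1} \<subseteq> S"
      using segment_point_in_convex[OF S(1) x s] by (auto simp: v)
    have p: "(?p has_derivative (\<lambda>t. t *\<^sub>R v)) (at 0 within {0..1})"
      by (auto intro!: derivative_eq_intros)
    have chain: "((f \<circ> ?p) has_derivative (g \<circ> (\<lambda>t. t *\<^sub>R v))) (at 0 within {0..1})"
      if "(f has_derivative g) (at x within S)" for g
      by (rule diff_chain_within[OF p]) (use has_derivative_subset[OF that segment] in simp)
    have "(f1 \<circ> (\<lambda>t. t *\<^sub>R v)) = (f2 \<circ> (\<lambda>t. t *\<^sub>R v))"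
      by (rule frechet_derivative_unique_within_closed_interval[of 0 1 0 "f \<circ> ?p", unfolded cbox_interval])
        (use chain[OF f1] chain[OF f2] in auto)
    then show ?thesis by (metis comp_apply scaleR_one)
  qed
  have "(+) x ` span ((\<lambda>s. - x + s) ` S) = UNIV"
    using affine_hull_span_gen[OF hull_inc[OF x]] affine_hull_nonempty_interior[OF S(2)] by simp
  then have "span ((\<lambda>s. - x + s) ` S) = UNIV"
    by (metis add_left_imp_eq inj_def inj_image_eq_iff surj_plus)
  then show ?thesis
    using linear_eq_on[OF has_derivative_linear[OF f1] has_derivative_linear[OF f2] _ on_directions]
    by blast
qed

lemma linear_derivative_in_parameter:
  fixes F :: "'c::real_vector \<Rightarrow> 'a::euclidean_space \<Rightarrow> 'b::real_normed_vector"
  assumes S: "convex S" "interior S \<noteq> {}" and x: "x \<in> S"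
    and F': "\<And>p. (F p has_derivative F' p) (at x within S)"
    and F_linear: "\<And>s. s \<in> S \<Longrightarrow> linear (\<lambda>p. F p s)"
  shows "linear (\<lambda>p. F' p h)"
proof (rule linearI)
  fix p q
  have "(F (p + q) has_derivative (\<lambda>h. F' p h + F' q h)) (at x within S)"
    by (rule has_derivative_transform[OF x _ has_derivative_add[OF F' F']])
      (simp add: linear_add[OF F_linear])
  then show "F' (p + q) h = F' p h + F' q h"
    using has_derivative_unique_convex[OF S x F'] by metis
next
  fix c :: real and p
  have "(F (c *\<^sub>R p) has_derivative (\<lambda>h. c *\<^sub>R F' p h)) (at x within S)"
    by (rule has_derivative_transform[OF x _ has_derivative_scaleR_right[OF F']])
      (simp add: linear_scale[OF F_linear])
  then show "F' (c *\<^sub>R p) h = c *\<^sub>R F' p h"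
    using has_derivative_unique_convex[OF S x F'] by metis
qed

lemma norm_le_if_inner_bounded:
  fixes a :: "'a::euclidean_space"
  assumes bound: "\<And>v. \<bar>a \<bullet> v\<bar> \<le> c * norm v"
  shows "norm a \<le> c"
proof (cases "a = 0")
  case True
  obtain b :: 'a where "b \<in> Basis"
    using nonempty_Basis by blast
  then show ?thesis
    using bound[of b] True by simp
next
  case False
  have "norm a * norm a \<le> c * norm a"
    using bound[of a] by (simp add: power2_norm_eq_inner[symmetric] power2_eq_square)
  then show ?thesis
    using False by simp
qed

section \<open>Multilinear forms\<close>

definition multilinear_form :: "nat \<Rightarrow> ('b::real_vector list \<Rightarrow> real) \<Rightarrow> bool" where
  "multilinear_form n T \<longleftrightarrow> (\<forall>i<n. \<forall>vs. length vs = n \<longrightarrow> linear (\<lambda>v. T (vs[i := v])))"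

lemma multilinear_form_0 [simp]: "multilinear_form 0 T"
  by (simp add: multilinear_form_def)

lemma multilinear_form_Suc:
  fixes T :: "'b::real_vector list \<Rightarrow> real"
  shows "multilinear_form (Suc n) T \<longleftrightarrow>
     (\<forall>vs. length vs = n \<longrightarrow> linear (\<lambda>v. T (v # vs))) \<and> (\<forall>v. multilinear_form n (\<lambda>vs. T (v # vs)))"
  (is "?ml \<longleftrightarrow> ?head \<and> ?tail")
proof
  assume T: ?ml
  have "linear (\<lambda>v. T (v # vs))" if "length vs = n" for vs
    using T[unfolded multilinear_form_def, rule_format, of 0 "0 # vs"] that by simp
  moreover have "linear (\<lambda>u. T (v # vs[i := u]))" if "i < n" "length vs = n" for v vs i
    using T[unfolded multilinear_form_def, rule_format, of "Suc i" "v # vs"] that by simp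
  ultimately show "?head \<and> ?tail"
    by (auto simp: multilinear_form_def)
next
  assume head_tail: "?head \<and> ?tail"
  show ?ml
    unfolding multilinear_form_def
  proof (intro allI impI)
    fix i and vs :: "'b list" assume i: "i < Suc n" and "length vs = Suc n"
    then obtain v0 vs' where "vs = v0 # vs'" and "length vs' = n"
      by (cases vs) auto
    then show "linear (\<lambda>v. T (vs[i := v]))"
      using head_tail i by (cases i) (auto simp: multilinear_form_def)
  qed
qed

lemma multilinear_form_diff:
  "multilinear_form n S \<Longrightarrow> multilinear_form n T \<Longrightarrow> multilinear_form n (\<lambda>vs. S vs - T vs)"
  by (simp add: multilinear_form_def linear_compose_sub)

lemma multilinear_form_replicate_scaleR:
  assumes "multilinear_form n T"
  shows "T (replicate n (c *\<^sub>R w)) = c ^ n * T (replicate n w)"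
  using assms
proof (induction n arbitrary: T)
  case (Suc n)
  then have lin: "linear (\<lambda>v. T (v # replicate n w))"
    and ml: "multilinear_form n (\<lambda>vs. T (c *\<^sub>R w # vs))"
    by (simp_all add: multilinear_form_Suc)
  have "T (replicate (Suc n) (c *\<^sub>R w)) = c ^ n * T (c *\<^sub>R w # replicate n w)"
    using Suc.IH[OF ml] by simp
  also have "\<dots> = c ^ Suc n * T (replicate (Suc n) w)"
    using linear_scale[OF lin] by simp
  finally show ?case .
qed simp

lemma multilinear_form_derivative:
  fixes F :: "'a::euclidean_space \<Rightarrow> 'b::real_vector list \<Rightarrow> real"
  assumes S: "convex S" "interior S \<noteq> {}" and s: "s \<in> S"
    and F': "\<And>vs. ((\<lambda>s. F s vs) has_derivative (\<lambda>h. F' h vs)) (at s within S)"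
    and F: "\<And>s. s \<in> S \<Longrightarrow> multilinear_form n (F s)"
  shows "multilinear_form n (F' h)"
  unfolding multilinear_form_def
proof (intro allI impI)
  fix i and vs :: "'b list" assume "i < n" "length vs = n"
  then show "linear (\<lambda>v. F' h (vs[i := v]))"
    using linear_derivative_in_parameter[OF S s, of "\<lambda>v s. F s (vs[i := v])" "\<lambda>v h. F' h (vs[i := v])"]
      F F' by (auto simp: multilinear_form_def)
qed

definition unit_lists :: "nat \<Rightarrow> 'b::real_normed_vector list set" where
  "unit_lists n = {vs. length vs = n \<and> (\<forall>v\<in>set vs. norm v \<le> 1)}"

lemma linear_family_bounded_on_unit_ball:
  fixes T :: "'a::euclidean_space \<Rightarrow> 'c \<Rightarrow> real"
  assumes lin: "\<And>p. p \<in> A \<Longrightarrow> linear (\<lambda>u. T u p)"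
    and bounded: "\<And>b. b \<in> Basis \<Longrightarrow> \<exists>M. \<forall>p\<in>A. \<bar>T b p\<bar> \<le> M"
  shows "\<exists>M. \<forall>u p. norm u \<le> 1 \<longrightarrow> p \<in> A \<longrightarrow> \<bar>T u p\<bar> \<le> M"
proof -
  obtain M where M: "\<And>b p. b \<in> Basis \<Longrightarrow> p \<in> A \<Longrightarrow> \<bar>T b p\<bar> \<le> M b"
    using bounded by metis
  have "\<bar>T u p\<bar> \<le> (\<Sum>b\<in>Basis. M b)" if u: "norm u \<le> 1" and p: "p \<in> A" for u p
  proof -
    have "T u p = T (\<Sum>b\<in>Basis. (u \<bullet> b) *\<^sub>R b) p"
      by (simp add: euclidean_representation)
    also have "\<dots> = (\<Sum>b\<in>Basis. (u \<bullet> b) * T b p)"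
      by (simp add: linear_sum[OF lin[OF p]] linear_scale[OF lin[OF p]])
    finally have "\<bar>T u p\<bar> \<le> (\<Sum>b\<in>Basis. \<bar>u \<bullet> b\<bar> * \<bar>T b p\<bar>)"
      by (metis (no_types, lifting) abs_mult sum.cong sum_abs)
    also have "\<dots> \<le> (\<Sum>b\<in>Basis. 1 * M b)"
      using Basis_le_norm u M p by (intro sum_mono mult_mono) (auto intro: order_trans)
    finally show ?thesis by simp
  qed
  then show ?thesis by blast
qed

lemma multilinear_form_bounded:
  fixes T :: "'b::euclidean_space list \<Rightarrow> real"
  assumes "multilinear_form n T"
  shows "\<exists>M. \<forall>vs\<in>unit_lists n. \<bar>T vs\<bar> \<le> M"
  using assms
proof (induction n arbitrary: T)
  case 0
  then show ?case by (auto simp: unit_lists_def)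
next
  case (Suc n)
  have "\<exists>M. \<forall>v vs. norm v \<le> 1 \<longrightarrow> vs \<in> unit_lists n \<longrightarrow> \<bar>T (v # vs)\<bar> \<le> M"
    by (rule linear_family_bounded_on_unit_ball)
      (use Suc in \<open>auto simp: multilinear_form_Suc unit_lists_def\<close>)
  then obtain M where M: "\<And>v vs. norm v \<le> 1 \<Longrightarrow> vs \<in> unit_lists n \<Longrightarrow> \<bar>T (v # vs)\<bar> \<le> M"
    by blast
  show ?case
  proof (intro exI ballI)
    fix vs :: "'b list" assume "vs \<in> unit_lists (Suc n)"
    then obtain v vs' where "vs = v # vs'" "norm v \<le> 1" "vs' \<in> unit_lists n"
      by (cases vs) (auto simp: unit_lists_def)
    then show "\<bar>T vs\<bar> \<le> M"
      using M by simp
  qed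
qed

lemma mixed_opnorm_bound:
  fixes T :: "'a::euclidean_space \<Rightarrow> 'b::euclidean_space list \<Rightarrow> real"
  assumes lin: "\<And>vs. linear (\<lambda>u. T u vs)" and ml: "\<And>u. multilinear_form k (T u)"
  shows "\<bar>T u (replicate k v)\<bar> \<le> mixed_opnorm k T * norm u * norm v ^ k"
proof -
  let ?A = "{(u, vs). norm u \<le> 1 \<and> length vs = k \<and> (\<forall>v\<in>set vs. norm v \<le> 1)}"
  obtain M where "\<forall>u vs. norm u \<le> 1 \<longrightarrow> vs \<in> unit_lists k \<longrightarrow> \<bar>T u vs\<bar> \<le> M"
    using linear_family_bounded_on_unit_ball[of "unit_lists k" T] lin multilinear_form_bounded[OF ml]
    by blast
  then have "bdd_above ((\<lambda>p. \<bar>T (fst p) (snd p)\<bar>) ` ?A)"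
    by (auto simp: bdd_above_def unit_lists_def)
  then have opnorm: "\<bar>T u' vs\<bar> \<le> mixed_opnorm k T" if "(u', vs) \<in> ?A" for u' vs
    unfolding mixed_opnorm_def using cSUP_upper[OF that] by fastforce
  have norm_sgn_scaleR: "z = norm z *\<^sub>R sgn z" for z :: "'c::real_normed_vector"
    by (cases "z = 0") (simp_all add: sgn_div_norm)
  have "T u (replicate k v) = T (norm u *\<^sub>R sgn u) (replicate k (norm v *\<^sub>R sgn v))"
    using norm_sgn_scaleR by metis
  also have "\<dots> = norm u * norm v ^ k * T (sgn u) (replicate k (sgn v))"
    by (simp add: multilinear_form_replicate_scaleR[OF ml] linear_scale[OF lin])
  finally have "\<bar>T u (replicate k v)\<bar> = norm u * norm v ^ k * \<bar>T (sgn u) (replicate k (sgn v))\<bar>"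
    by (simp add: abs_mult)
  also have "\<dots> \<le> norm u * norm v ^ k * mixed_opnorm k T"
    by (intro mult_left_mono opnorm) (auto simp: norm_sgn)
  finally show ?thesis by (simp add: ac_simps)
qed

lemma mixed_opnorm_nonneg:
  fixes T :: "'a::euclidean_space \<Rightarrow> 'b::euclidean_space list \<Rightarrow> real"
  assumes "\<And>vs. linear (\<lambda>u. T u vs)" and "\<And>u. multilinear_form k (T u)"
  shows "0 \<le> mixed_opnorm k T"
proof -
  obtain b :: 'a where "b \<in> Basis"
    using nonempty_Basis by blast
  moreover obtain b' :: 'b where "b' \<in> Basis"
    using nonempty_Basis by blast
  ultimately show ?thesis
    using mixed_opnorm_bound[OF assms, of b b'] by (simp add: order_trans[OF abs_ge_zero])
qed

section \<open>Differentiation under the integral sign\<close>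

lemma Lipschitz_derivative_remainder_bound:
  fixes g :: "'a::real_normed_vector \<Rightarrow> 'b::real_normed_vector"
  assumes S: "convex S" and x: "x \<in> S" and x': "x' \<in> S" and c: "0 \<le> c"
    and g': "\<And>p. p \<in> S \<Longrightarrow> (g has_derivative g' p) (at p within S)"
    and Lipschitz: "\<And>p h. p \<in> S \<Longrightarrow> norm (g' p h - g' x h) \<le> c * norm (p - x) * norm h"
  shows "norm (g x' - g x - g' x (x' - x)) \<le> c * norm (x' - x)^2"
proof -
  let ?L = "closed_segment x x'"
  have L: "?L \<subseteq> S"
    by (rule closed_segment_subset[OF x x' S])
  have "norm (g x' - g x - g' x (x' - x)) \<le> norm (x' - x) * (c * norm (x' - x))"
  proof (rule differentiable_bound_linearization[of x x' ?L g g' x])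
    show "x + t *\<^sub>R (x' - x) \<in> ?L" if "t \<in> {0..1}" for t
      using that by (auto simp: in_segment algebra_simps intro!: exI[of _ t])
    show "(g has_derivative g' p) (at p within ?L)" if "p \<in> ?L" for p
      using has_derivative_subset[OF g'] L that by blast
    show "onorm (g' p - g' x) \<le> c * norm (x' - x)" if p: "p \<in> ?L" for p
    proof (rule onorm_bound)
      show "0 \<le> c * norm (x' - x)"
        using c by simp
      fix h
      have "norm ((g' p - g' x) h) \<le> c * norm (p - x) * norm h"
        using Lipschitz p L by auto
      also have "\<dots> \<le> c * norm (x' - x) * norm h"
        using segment_bound1[OF p] c by (intro mult_right_mono mult_left_mono) auto
      finally show "norm ((g' p - g' x) h) \<le> c * norm (x' - x) * norm h" .
    qed
  qed auto
  then show ?thesis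
    by (simp add: power2_eq_square ac_simps)
qed

lemma has_derivative_quadratic_remainder:
  assumes "bounded_linear f'"
    and remainder: "\<And>x'. x' \<in> S \<Longrightarrow> norm (f x' - f x - f' (x' - x)) \<le> C * norm (x' - x)^2"
  shows "(f has_derivative f') (at x within S)"
  unfolding has_derivative_within_alt
proof (intro conjI allI impI assms(1))
  fix e :: real assume e: "0 < e"
  have pos: "0 < \<bar>C\<bar> + 1"
    by simp
  show "\<exists>d>0. \<forall>x'\<in>S. norm (x' - x) < d \<longrightarrow> norm (f x' - f x - f' (x' - x)) \<le> e * norm (x' - x)"
  proof (intro exI[of _ "e / (\<bar>C\<bar> + 1)"] conjI ballI impI)
    show "0 < e / (\<bar>C\<bar> + 1)"
      using e pos by simp
    fix x' assume x': "x' \<in> S" and close: "norm (x' - x) < e / (\<bar>C\<bar> + 1)"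
    have "norm (f x' - f x - f' (x' - x)) \<le> C * norm (x' - x)^2"
      by (rule remainder[OF x'])
    also have "\<dots> \<le> (\<bar>C\<bar> + 1) * norm (x' - x)^2"
      by (intro mult_right_mono) auto
    also have "\<dots> = ((\<bar>C\<bar> + 1) * norm (x' - x)) * norm (x' - x)"
      by (simp add: power2_eq_square)
    also have "\<dots> \<le> e * norm (x' - x)"
      using close pos_less_divide_eq[OF pos] by (intro mult_right_mono) (simp_all add: ac_simps)
    finally show "norm (f x' - f x - f' (x' - x)) \<le> e * norm (x' - x)" .
  qed
qed

lemma integrable_derivative_along_direction:
  fixes g :: "'a::real_normed_vector \<Rightarrow> real \<Rightarrow> real"
  assumes X: "convex X" and x: "x \<in> X" and x': "x' \<in> X" and C: "0 \<le> C"
    and cont: "\<And>z. z \<in> X \<Longrightarrow> continuous_on {a..b} (g z)"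
    and lin: "\<And>t. t \<in> {a..b} \<Longrightarrow> linear (g' t)"
    and remainder: "\<And>z t. z \<in> X \<Longrightarrow> t \<in> {a..b} \<Longrightarrow> \<bar>g z t - g x t - g' t (z - x)\<bar> \<le> C * norm (z - x)^2"
  shows "(\<lambda>t. g' t (x' - x)) integrable_on {a..b}"
proof -
  \<comment> \<open>g' t h need not be continuous in t; it is the pointwise limit of the continuous difference
    quotients q n, which the quadratic remainder bound keeps uniformly bounded.\<close>
  define h where "h = x' - x"
  define xn where "xn n = x + (1 / real (Suc n)) *\<^sub>R h" for n
  define q where "q n t = real (Suc n) * (g (xn n) t - g x t)" for n t
  have xn: "xn n \<in> X" for n
    using segment_point_in_convex[OF X x x', of "1 / real (Suc n)"] by (simp add: xn_def h_def)
  have q_integrable: "q n integrable_on {a..b}" for n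
    unfolding q_def
    by (intro integrable_continuous_interval continuous_intros cont xn x)
  have q_approx: "\<bar>q n t - g' t h\<bar> \<le> C * norm h ^ 2 / real (Suc n)" if t: "t \<in> {a..b}" for n t
  proof -
    define N where "N = real (Suc n)"
    have N: "0 < N" by (simp add: N_def)
    have step: "xn n - x = (1 / N) *\<^sub>R h"
      by (simp add: xn_def N_def)
    have "q n t = N * (g (xn n) t - g x t)"
      by (simp add: q_def N_def)
    then have "q n t - g' t h = N * (g (xn n) t - g x t - g' t (xn n - x))"
      using N linear_scale[OF lin[OF t], of "1 / N" h]
      by (simp add: step right_diff_distrib)
    then have "\<bar>q n t - g' t h\<bar> \<le> N * (C * norm (xn n - x) ^ 2)"
      using remainder[OF xn t] N by (simp add: abs_mult)
    also have "\<dots> = C * norm h ^ 2 / N"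
      using N by (simp add: step power2_eq_square field_simps)
    finally show ?thesis by (simp add: N_def)
  qed
  obtain M where M: "\<And>t. t \<in> {a..b} \<Longrightarrow> \<bar>g x' t - g x t\<bar> \<le> M"
    using compact_imp_bounded[OF compact_continuous_image[OF continuous_on_diff[OF cont[OF x'] cont[OF x]]]]
    unfolding bounded_iff by (auto simp del: atLeastAtMost_iff)
  show ?thesis
    unfolding h_def[symmetric]
  proof (rule dominated_convergence(1)[OF q_integrable integrable_const_ivl])
    fix n and t :: real assume t: "t \<in> {a..b}"
    have "\<bar>g' t h\<bar> \<le> M + C * norm h ^ 2"
      using remainder[OF x' t] M[OF t] by (simp add: h_def)
    moreover have "C * norm h ^ 2 / real (Suc n) \<le> C * norm h ^ 2"
      using C divide_left_mono[of 1 "real (Suc n)" "C * norm h ^ 2"] by simp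
    ultimately show "norm (q n t) \<le> M + 2 * C * norm h ^ 2"
      using q_approx[OF t, of n] by simp
  next
    fix t :: real assume t: "t \<in> {a..b}"
    have "(\<lambda>n. q n t - g' t h) \<longlonglongrightarrow> 0"
    proof (rule Lim_null_comparison)
      show "\<forall>\<^sub>F n in sequentially. norm (q n t - g' t h) \<le> C * norm h ^ 2 * (1 / real (Suc n))"
        using q_approx[OF t] by simp
      show "(\<lambda>n. C * norm h ^ 2 * (1 / real (Suc n))) \<longlonglongrightarrow> 0"
        by (intro tendsto_mult_right_zero LIMSEQ_Suc lim_1_over_n)
    qed
    then show "(\<lambda>n. q n t) \<longlonglongrightarrow> g' t h"
      by (simp add: LIM_zero_iff)
  qed
qed

lemma integrable_linear_family_of_directions:
  fixes g' :: "real \<Rightarrow> 'a::real_normed_vector \<Rightarrow> real"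
  assumes X: "interior X \<noteq> {}" and lin: "\<And>t. t \<in> S \<Longrightarrow> linear (g' t)"
    and directions: "\<And>x'. x' \<in> X \<Longrightarrow> (\<lambda>t. g' t (x' - x)) integrable_on S"
  shows "(\<lambda>t. g' t u) integrable_on S"
proof -
  \<comment> \<open>Every u is a multiple of the difference of two directions x0 + e u - x and x0 - x.\<close>
  obtain x0 r where r: "0 < r" "ball x0 r \<subseteq> X"
    using X mem_interior by blast
  define e where "e = r / (norm u + 1)"
  have e: "0 < e"
    using r by (simp add: e_def add_nonneg_pos)
  have "norm (e *\<^sub>R u) < r"
    using r by (simp add: e_def divide_less_eq add_nonneg_pos)
  then have "x0 + e *\<^sub>R u \<in> X" "x0 \<in> X"
    using r by (auto simp: dist_norm)
  then have "(\<lambda>t. (1 / e) *\<^sub>R (g' t (x0 + e *\<^sub>R u - x) - g' t (x0 - x))) integrable_on S"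
    by (intro integrable_cmul integrable_diff directions)
  then show ?thesis
  proof (rule integrable_eq)
    fix t assume t: "t \<in> S"
    have "g' t (x0 + e *\<^sub>R u - x) - g' t (x0 - x) = g' t (e *\<^sub>R u)"
      by (simp add: linear_diff[OF lin[OF t], symmetric])
    then show "(1 / e) *\<^sub>R (g' t (x0 + e *\<^sub>R u - x) - g' t (x0 - x)) = g' t u"
      using e by (simp add: linear_scale[OF lin[OF t]])
  qed
qed

lemma integrable_parametric_derivative:
  fixes g :: "'a::euclidean_space \<Rightarrow> real \<Rightarrow> real"
  assumes X: "convex X" "interior X \<noteq> {}" and x: "x \<in> X" and C: "0 \<le> C"
    and cont: "\<And>z. z \<in> X \<Longrightarrow> continuous_on {a..b} (g z)"
    and lin: "\<And>t. t \<in> {a..b} \<Longrightarrow> linear (g' t)"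
    and remainder: "\<And>z t. z \<in> X \<Longrightarrow> t \<in> {a..b} \<Longrightarrow> \<bar>g z t - g x t - g' t (z - x)\<bar> \<le> C * norm (z - x)^2"
  shows "(\<lambda>t. g' t u) integrable_on {a..b}"
  using integrable_linear_family_of_directions[of X "{a..b}" g' x u] X(2) lin
    integrable_derivative_along_direction[OF X(1) x _ C cont lin remainder]
  by blast

lemma has_derivative_parametric_integral:
  fixes g :: "'a::euclidean_space \<Rightarrow> real \<Rightarrow> real"
  assumes X: "convex X" "interior X \<noteq> {}" and x: "x \<in> X" and C: "0 \<le> C"
    and cont: "\<And>z. z \<in> X \<Longrightarrow> continuous_on {a..b} (g z)"
    and lin: "\<And>t. t \<in> {a..b} \<Longrightarrow> linear (g' t)"
    and remainder: "\<And>z t. z \<in> X \<Longrightarrow> t \<in> {a..b} \<Longrightarrow> \<bar>g z t - g x t - g' t (z - x)\<bar> \<le> C * norm (z - x)^2"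
  shows "((\<lambda>z. integral {a..b} (g z)) has_derivative (\<lambda>u. integral {a..b} (\<lambda>t. g' t u))) (at x within X)"
proof (rule has_derivative_quadratic_remainder[where C = "measure lborel {a..b} * C"])
  have g_integrable: "g z integrable_on {a..b}" if "z \<in> X" for z
    using integrable_continuous_interval cont that by blast
  have g'_integrable: "(\<lambda>t. g' t u) integrable_on {a..b}" for u
    by (rule integrable_parametric_derivative[OF X x C cont lin remainder])
  show "bounded_linear (\<lambda>u. integral {a..b} (\<lambda>t. g' t u))"
    unfolding linear_conv_bounded_linear[symmetric]
  proof (rule linearI)
    fix u v
    have "integral {a..b} (\<lambda>t. g' t (u + v)) = integral {a..b} (\<lambda>t. g' t u + g' t v)"
      by (rule integral_cong) (simp add: linear_add[OF lin])
    also have "\<dots> = integral {a..b} (\<lambda>t. g' t u) + integral {a..b} (\<lambda>t. g' t v)"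
      by (rule integral_add[OF g'_integrable g'_integrable])
    finally show "integral {a..b} (\<lambda>t. g' t (u + v)) = integral {a..b} (\<lambda>t. g' t u) + integral {a..b} (\<lambda>t. g' t v)" .
  next
    fix c :: real and u
    have "integral {a..b} (\<lambda>t. g' t (c *\<^sub>R u)) = integral {a..b} (\<lambda>t. c * g' t u)"
      by (rule integral_cong) (simp add: linear_scale[OF lin])
    then show "integral {a..b} (\<lambda>t. g' t (c *\<^sub>R u)) = c *\<^sub>R integral {a..b} (\<lambda>t. g' t u)"
      by simp
  qed
  fix z assume z: "z \<in> X"
  have "integral {a..b} (g z) - integral {a..b} (g x) - integral {a..b} (\<lambda>t. g' t (z - x))
      = integral {a..b} (\<lambda>t. g z t - g x t - g' t (z - x))"
    by (simp add: integral_diff integrable_diff g_integrable g'_integrable z x)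
  also have "norm \<dots> \<le> integral {a..b} (\<lambda>t. C * norm (z - x)^2)"
  proof (rule integral_norm_bound_integral)
    show "(\<lambda>t. g z t - g x t - g' t (z - x)) integrable_on {a..b}"
      by (intro integrable_diff g_integrable g'_integrable x z)
  qed (use remainder z in auto)
  finally show "norm (integral {a..b} (g z) - integral {a..b} (g x) - integral {a..b} (\<lambda>t. g' t (z - x)))
      \<le> measure lborel {a..b} * C * norm (z - x)^2"
    by (simp add: ac_simps)
qed

section \<open>Taylor's formula with integral remainder\<close>

definition taylor_kernel :: "nat \<Rightarrow> real \<Rightarrow> real" where
  "taylor_kernel k t = (1 - t) ^ (k - 1) / fact (k - 1)"

lemma taylor_kernel_nonneg: "t \<le> 1 \<Longrightarrow> 0 \<le> taylor_kernel k t"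
  by (simp add: taylor_kernel_def)

lemma taylor_kernel_le_1: "0 \<le> t \<Longrightarrow> t \<le> 1 \<Longrightarrow> taylor_kernel k t \<le> 1"
proof -
  assume t: "0 \<le> t" "t \<le> 1"
  have "(1 - t) ^ (k - 1) / fact (k - 1) \<le> (1 - t) ^ (k - 1) / 1"
    using t by (intro divide_left_mono) auto
  also have "\<dots> \<le> 1"
    using t by (simp add: power_le_one)
  finally show ?thesis
    by (simp add: taylor_kernel_def)
qed

lemma continuous_on_taylor_kernel: "continuous_on S (taylor_kernel k)"
  unfolding taylor_kernel_def by (intro continuous_intros) auto

lemma taylor_kernel_has_integral:
  assumes k: "0 < k"
  shows "(taylor_kernel k has_integral 1 / fact k) {0..1}"
proof -
  let ?K = "\<lambda>t. - ((1 - t) ^ k / fact k)"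
  have "(taylor_kernel k has_integral (?K 1 - ?K 0)) {0..1}"
  proof (rule fundamental_theorem_of_calculus)
    fix t :: real
    have "fact k = real k * fact (k - 1)"
      using k by (simp add: fact_reduce)
    then have "real k * (1 - t) ^ (k - 1) / fact k = taylor_kernel k t"
      using k by (simp add: taylor_kernel_def)
    then show "(?K has_vector_derivative taylor_kernel k t) (at t within {0..1})"
      unfolding has_real_derivative_iff_has_vector_derivative[symmetric]
      by (auto intro!: derivative_eq_intros)
  qed simp
  then show ?thesis
    using k by (simp add: power_0_left)
qed

lemma Taylor_integral_segment:
  fixes F :: "nat \<Rightarrow> 'b::real_normed_vector \<Rightarrow> 'b list \<Rightarrow> real"
  assumes Y: "convex Y" and yhat: "yhat \<in> Y" and y: "y \<in> Y" and k: "0 < k"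
    and F': "\<And>j z vs. j < k \<Longrightarrow> z \<in> Y \<Longrightarrow>
      ((\<lambda>z'. F j z' vs) has_derivative (\<lambda>v. F (Suc j) z (v # vs))) (at z within Y)"
  shows "F 0 y [] = (\<Sum>j<k. F j yhat (replicate j (y - yhat)) / fact j)
    + integral {0..1} (\<lambda>t. taylor_kernel k t * F k (yhat + t *\<^sub>R (y - yhat)) (replicate k (y - yhat)))"
proof -
  define w where "w = y - yhat"
  define p where "p t = yhat + t *\<^sub>R w" for t :: real
  define Fp where "Fp j t = F j (p t) (replicate j w)" for j t
  have p_Y: "p ` {0..1} \<subseteq> Y"
    using segment_point_in_convex[OF Y yhat y] by (auto simp: p_def w_def)
  have Fp_derivative: "(Fp j has_vector_derivative Fp (Suc j) t) (at t within {0..1})"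
    if j: "j < k" and "0 \<le> t" "t \<le> 1" for j t
  proof -
    have "p t \<in> Y"
      using p_Y that by auto
    then have F'_j: "((\<lambda>z. F j z (replicate j w)) has_derivative (\<lambda>v. F (Suc j) (p t) (v # replicate j w)))
        (at (p t) within Y)"
      using F' j by blast
    have "(p has_derivative (\<lambda>s. s *\<^sub>R w)) (at t within {0..1})"
      unfolding p_def by (auto intro!: derivative_eq_intros)
    from diff_chain_within[OF this has_derivative_subset[OF F'_j p_Y]]
    have "(Fp j has_derivative (\<lambda>s. F (Suc j) (p t) (s *\<^sub>R w # replicate j w))) (at t within {0..1})"
      by (simp add: Fp_def[abs_def] comp_def)
    then show ?thesis
      unfolding has_vector_derivative_def Fp_def
      by (simp add: linear_scale[OF has_derivative_linear[OF F'_j]])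
  qed
  from Taylor_integral[of k Fp "Fp 0" 0 1, OF k refl Fp_derivative]
  show ?thesis
    by (simp add: Fp_def p_def w_def taylor_kernel_def)
qed

section \<open>The Taylor polynomial in y\<close>

locale partial_taylor =
  fixes f :: "'a::euclidean_space \<Rightarrow> 'b::euclidean_space \<Rightarrow> real"
    and X :: "'a set" and Y :: "'b set"
    and gx :: "'a \<Rightarrow> 'b \<Rightarrow> 'a"
    and Dy :: "nat \<Rightarrow> 'a \<Rightarrow> 'b \<Rightarrow> 'b list \<Rightarrow> real"
    and Dxy :: "'a \<Rightarrow> 'b \<Rightarrow> 'a \<Rightarrow> 'b list \<Rightarrow> real"
    and k :: nat and lam tau :: real
  assumes X: "convex X" "interior X \<noteq> {}"
    and Y: "convex Y" "interior Y \<noteq> {}"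
    and k: "0 < k"
    and gx: "\<And>x z. x \<in> X \<Longrightarrow> z \<in> Y \<Longrightarrow> ((\<lambda>x'. f x' z) has_derivative (\<lambda>u. gx x z \<bullet> u)) (at x within X)"
    and gx_Lipschitz: "\<And>x x' z. x \<in> X \<Longrightarrow> x' \<in> X \<Longrightarrow> z \<in> Y \<Longrightarrow>
      norm (gx x' z - gx x z) \<le> lam * norm (x' - x)"
    and Dy0: "\<And>x z. Dy 0 x z [] = f x z"
    and Dy: "\<And>j x z vs. j < k \<Longrightarrow> x \<in> X \<Longrightarrow> z \<in> Y \<Longrightarrow>
      ((\<lambda>z'. Dy j x z' vs) has_derivative (\<lambda>v. Dy (Suc j) x z (v # vs))) (at z within Y)"
    and Dxy: "\<And>x z vs. x \<in> X \<Longrightarrow> z \<in> Y \<Longrightarrow>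
      ((\<lambda>x'. Dy k x' z vs) has_derivative (\<lambda>u. Dxy x z u vs)) (at x within X)"
    and Dxy_Lipschitz: "\<And>x x' z. x \<in> X \<Longrightarrow> x' \<in> X \<Longrightarrow> z \<in> Y \<Longrightarrow>
      mixed_opnorm k (\<lambda>u vs. Dxy x' z u vs - Dxy x z u vs) \<le> tau * norm (x' - x)"
    and Dy_continuous: "\<And>x vs. x \<in> X \<Longrightarrow> continuous_on Y (\<lambda>z. Dy k x z vs)"
begin

lemma Dy_multilinear: "j \<le> k \<Longrightarrow> x \<in> X \<Longrightarrow> z \<in> Y \<Longrightarrow> multilinear_form j (Dy j x z)"
proof (induction j arbitrary: z)
  case (Suc j)
  have Dy_j: "((\<lambda>z'. Dy j x z' vs) has_derivative (\<lambda>v. Dy (Suc j) x z (v # vs))) (at z within Y)" for vs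
    using Dy Suc.prems by simp
  have "multilinear_form j (\<lambda>vs. Dy (Suc j) x z (v # vs))" for v
    by (rule multilinear_form_derivative[OF Y \<open>z \<in> Y\<close> Dy_j]) (use Suc in simp)
  then show ?case
    using has_derivative_linear[OF Dy_j] by (simp add: multilinear_form_Suc)
qed simp

lemma Dxy_linear: "x \<in> X \<Longrightarrow> z \<in> Y \<Longrightarrow> linear (\<lambda>u. Dxy x z u vs)"
  using Dxy has_derivative_linear by blast

lemma Dxy_multilinear: "x \<in> X \<Longrightarrow> z \<in> Y \<Longrightarrow> multilinear_form k (Dxy x z u)"
  by (rule multilinear_form_derivative[OF X _ Dxy]) (auto intro: Dy_multilinear)

lemma Dxy_diff_bound:
  assumes "x \<in> X" "x' \<in> X" "z \<in> Y"
  shows "\<bar>Dxy x' z u (replicate k v) - Dxy x z u (replicate k v)\<bar> \<le> tau * norm (x' - x) * norm u * norm v ^ k"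
proof -
  let ?T = "\<lambda>u vs. Dxy x' z u vs - Dxy x z u vs"
  have "\<bar>?T u (replicate k v)\<bar> \<le> mixed_opnorm k ?T * norm u * norm v ^ k"
    using assms by (intro mixed_opnorm_bound linear_compose_sub multilinear_form_diff Dxy_linear Dxy_multilinear)
  also have "\<dots> \<le> tau * norm (x' - x) * norm u * norm v ^ k"
    using Dxy_Lipschitz[OF assms] by (intro mult_right_mono) auto
  finally show ?thesis .
qed

lemma tau_nonneg: "0 \<le> tau"
proof -
  obtain x r where r: "0 < r" "ball x r \<subseteq> X"
    using X(2) mem_interior by blast
  obtain b :: 'a where b: "b \<in> Basis"
    using nonempty_Basis by blast
  define x' where "x' = x + (r / 2) *\<^sub>R b"
  have "x \<in> X" "x' \<in> X"
    using r b by (auto simp: x'_def dist_norm)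
  obtain z where "z \<in> Y"
    using Y(2) interior_subset by blast
  have "0 \<le> mixed_opnorm k (\<lambda>u vs. Dxy x' z u vs - Dxy x z u vs)"
    using \<open>x \<in> X\<close> \<open>x' \<in> X\<close> \<open>z \<in> Y\<close>
    by (intro mixed_opnorm_nonneg linear_compose_sub multilinear_form_diff Dxy_linear Dxy_multilinear)
  also have "\<dots> \<le> tau * norm (x' - x)"
    using Dxy_Lipschitz \<open>x \<in> X\<close> \<open>x' \<in> X\<close> \<open>z \<in> Y\<close> by blast
  finally show ?thesis
    using r b by (simp add: x'_def zero_le_mult_iff)
qed

lemma Dy_remainder_bound:
  assumes x: "x \<in> X" and x': "x' \<in> X" and z: "z \<in> Y"
  shows "\<bar>Dy k x' z (replicate k v) - Dy k x z (replicate k v) - Dxy x z (x' - x) (replicate k v)\<bar>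
    \<le> tau * norm v ^ k * norm (x' - x)^2"
  using Lipschitz_derivative_remainder_bound[OF X(1) x x', of "tau * norm v ^ k" "\<lambda>p. Dy k p z (replicate k v)"
      "\<lambda>p h. Dxy p z h (replicate k v)"]
    Dxy z Dxy_diff_bound[OF x _ z] tau_nonneg
  by (simp add: ac_simps)

definition taylor_remainder :: "'b \<Rightarrow> 'b \<Rightarrow> 'a \<Rightarrow> real" where
  "taylor_remainder yhat y x = integral {0..1}
     (\<lambda>t. taylor_kernel k t * Dy k x (yhat + t *\<^sub>R (y - yhat)) (replicate k (y - yhat)))"

definition taylor_y_derivative :: "'b \<Rightarrow> 'b \<Rightarrow> 'a \<Rightarrow> 'a \<Rightarrow> real" where
  "taylor_y_derivative yhat y x u = gx x y \<bullet> u
     - integral {0..1} (\<lambda>t. taylor_kernel k t * Dxy x (yhat + t *\<^sub>R (y - yhat)) u (replicate k (y - yhat)))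
     + Dxy x yhat u (replicate k (y - yhat)) / fact k"

lemma taylor_y_eq:
  assumes "yhat \<in> Y" "y \<in> Y" "x \<in> X"
  shows "taylor_y Dy k yhat x y = f x y - taylor_remainder yhat y x + Dy k x yhat (replicate k (y - yhat)) / fact k"
proof -
  obtain k' where k': "k = Suc k'"
    using k gr0_implies_Suc by blast
  have "taylor_y Dy k yhat x y
      = (\<Sum>j<k. Dy j x yhat (replicate j (y - yhat)) / fact j) + Dy k x yhat (replicate k (y - yhat)) / fact k"
    by (simp add: taylor_y_def k' lessThan_Suc_atMost[symmetric])
  also have "(\<Sum>j<k. Dy j x yhat (replicate j (y - yhat)) / fact j) = f x y - taylor_remainder yhat y x"
    using Taylor_integral_segment[OF Y(1) assms(1,2) k, of "\<lambda>j. Dy j x"] Dy assms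
    by (simp add: Dy0 taylor_remainder_def)
  finally show ?thesis .
qed

lemma has_derivative_taylor_remainder:
  assumes yhat: "yhat \<in> Y" and y: "y \<in> Y" and x: "x \<in> X"
  shows "(taylor_remainder yhat y has_derivative (\<lambda>u. integral {0..1}
      (\<lambda>t. taylor_kernel k t * Dxy x (yhat + t *\<^sub>R (y - yhat)) u (replicate k (y - yhat))))) (at x within X)"
    and "(\<lambda>t. taylor_kernel k t * Dxy x (yhat + t *\<^sub>R (y - yhat)) u (replicate k (y - yhat))) integrable_on {0..1}"
proof -
  let ?p = "\<lambda>t. yhat + t *\<^sub>R (y - yhat)"
  let ?W = "replicate k (y - yhat)"
  have p: "?p t \<in> Y" if "t \<in> {0..1}" for t
    using segment_point_in_convex[OF Y(1) yhat y that] .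
  have C: "0 \<le> tau * norm (y - yhat) ^ k"
    using tau_nonneg by simp
  have cont: "continuous_on {0..1} (\<lambda>t. taylor_kernel k t * Dy k z (?p t) ?W)" if "z \<in> X" for z
    by (intro continuous_intros continuous_on_taylor_kernel
        continuous_on_compose2[OF Dy_continuous[OF that]]) (use p in auto)
  have lin: "linear (\<lambda>u. taylor_kernel k t * Dxy x (?p t) u ?W)" if t: "t \<in> {0..1}" for t
    using real_vector.module_hom_scale[OF Dxy_linear[OF x p[OF t]]] by simp
  have remainder: "\<bar>taylor_kernel k t * Dy k z (?p t) ?W - taylor_kernel k t * Dy k x (?p t) ?W
      - taylor_kernel k t * Dxy x (?p t) (z - x) ?W\<bar> \<le> tau * norm (y - yhat) ^ k * norm (z - x)^2"
    if z: "z \<in> X" and t: "t \<in> {0..1}" for z t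
  proof -
    let ?R = "\<bar>Dy k z (?p t) ?W - Dy k x (?p t) ?W - Dxy x (?p t) (z - x) ?W\<bar>"
    have "\<bar>taylor_kernel k t\<bar> * ?R \<le> ?R"
      using t taylor_kernel_nonneg taylor_kernel_le_1 by (intro mult_left_le_one_le) auto
    also have "?R \<le> tau * norm (y - yhat) ^ k * norm (z - x)^2"
      by (rule Dy_remainder_bound[OF x z p[OF t]])
    finally show ?thesis
      by (simp add: right_diff_distrib[symmetric] abs_mult)
  qed
  show "(taylor_remainder yhat y has_derivative (\<lambda>u. integral {0..1}
      (\<lambda>t. taylor_kernel k t * Dxy x (?p t) u ?W))) (at x within X)"
    unfolding taylor_remainder_def
    by (rule has_derivative_parametric_integral[OF X x C cont lin remainder])
  show "(\<lambda>t. taylor_kernel k t * Dxy x (?p t) u ?W) integrable_on {0..1}"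
    by (rule integrable_parametric_derivative[OF X x C cont lin remainder])
qed

lemma has_derivative_taylor_y:
  assumes yhat: "yhat \<in> Y" and y: "y \<in> Y" and x: "x \<in> X"
  shows "((\<lambda>x'. taylor_y Dy k yhat x' y) has_derivative taylor_y_derivative yhat y x) (at x within X)"
proof -
  let ?W = "replicate k (y - yhat)"
  have "((\<lambda>x'. Dy k x' yhat ?W / fact k) has_derivative (\<lambda>u. Dxy x yhat u ?W / fact k)) (at x within X)"
    using has_derivative_scaleR_right[OF Dxy[OF x yhat], of "1 / fact k"] by simp
  then have "((\<lambda>x'. f x' y - taylor_remainder yhat y x' + Dy k x' yhat ?W / fact k)
      has_derivative taylor_y_derivative yhat y x) (at x within X)"
    unfolding taylor_y_derivative_def[abs_def]
    by (intro has_derivative_add has_derivative_diff gx[OF x y] has_derivative_taylor_remainder(1)[OF yhat y x])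
  then show ?thesis
    by (rule has_derivative_transform[OF x, rotated]) (simp add: taylor_y_eq[OF yhat y])
qed

lemma taylor_y_derivative_Lipschitz:
  assumes yhat: "yhat \<in> Y" and y: "y \<in> Y" and x: "x \<in> X" and x': "x' \<in> X"
  shows "\<bar>taylor_y_derivative yhat y x' v - taylor_y_derivative yhat y x v\<bar>
    \<le> (lam + 2 * tau * norm (y - yhat) ^ k / fact k) * norm (x' - x) * norm v"
proof -
  let ?p = "\<lambda>t. yhat + t *\<^sub>R (y - yhat)"
  let ?W = "replicate k (y - yhat)"
  let ?I = "\<lambda>x. integral {0..1} (\<lambda>t. taylor_kernel k t * Dxy x (?p t) v ?W)"
  define B where "B = tau * norm (x' - x) * norm v * norm (y - yhat) ^ k"
  have gx_part: "\<bar>(gx x' y - gx x y) \<bullet> v\<bar> \<le> lam * norm (x' - x) * norm v"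
    using Cauchy_Schwarz_ineq2[of "gx x' y - gx x y" v] gx_Lipschitz[OF x x' y]
    by (meson mult_right_mono norm_ge_zero order_trans)
  have "?I x' - ?I x = integral {0..1} (\<lambda>t. taylor_kernel k t * (Dxy x' (?p t) v ?W - Dxy x (?p t) v ?W))"
    by (simp add: integral_diff[symmetric] has_derivative_taylor_remainder(2) yhat y x x' right_diff_distrib)
  also have "norm \<dots> \<le> integral {0..1} (\<lambda>t. taylor_kernel k t * B)"
  proof (rule integral_norm_bound_integral)
    show "(\<lambda>t. taylor_kernel k t * (Dxy x' (?p t) v ?W - Dxy x (?p t) v ?W)) integrable_on {0..1}"
      using integrable_diff[OF has_derivative_taylor_remainder(2)[OF yhat y x'] has_derivative_taylor_remainder(2)[OF yhat y x]]
      by (simp add: right_diff_distrib)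
    show "(\<lambda>t. taylor_kernel k t * B) integrable_on {0..1}"
      using has_integral_mult_left[OF taylor_kernel_has_integral[OF k]] by blast
    fix t :: real assume t: "t \<in> {0..1}"
    show "norm (taylor_kernel k t * (Dxy x' (?p t) v ?W - Dxy x (?p t) v ?W)) \<le> taylor_kernel k t * B"
      using Dxy_diff_bound[OF x x' segment_point_in_convex[OF Y(1) yhat y t]] taylor_kernel_nonneg[of t k] t
      by (simp add: abs_mult B_def mult_left_mono)
  qed
  also have "\<dots> = B / fact k"
    using integral_unique[OF has_integral_mult_left[OF taylor_kernel_has_integral[OF k]]] by simp
  finally have integral_part: "\<bar>?I x' - ?I x\<bar> \<le> B / fact k"
    by simp
  have boundary_part: "\<bar>Dxy x' yhat v ?W / fact k - Dxy x yhat v ?W / fact k\<bar> \<le> B / fact k"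
    using Dxy_diff_bound[OF x x' yhat] by (simp add: B_def diff_divide_distrib[symmetric] divide_right_mono)
  have "taylor_y_derivative yhat y x' v - taylor_y_derivative yhat y x v
      = (gx x' y - gx x y) \<bullet> v - (?I x' - ?I x) + (Dxy x' yhat v ?W / fact k - Dxy x yhat v ?W / fact k)"
    by (simp add: taylor_y_derivative_def inner_diff_left algebra_simps)
  also have "\<bar>\<dots>\<bar> \<le> lam * norm (x' - x) * norm v + B / fact k + B / fact k"
    using gx_part integral_part boundary_part by linarith
  also have "\<dots> = (lam + 2 * tau * norm (y - yhat) ^ k / fact k) * norm (x' - x) * norm v"
    by (simp add: B_def field_simps)
  finally show ?thesis .
qed

theorem taylor_y_gradient_Lipschitz:
  assumes yhat: "yhat \<in> Y" and y: "y \<in> Y" and D: "norm (y - yhat) \<le> D"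
  shows "\<exists>G. (\<forall>x\<in>X. ((\<lambda>x'. taylor_y Dy k yhat x' y) has_derivative (\<lambda>u. G x \<bullet> u)) (at x within X)) \<and>
    (\<forall>x\<in>X. \<forall>x'\<in>X. norm (G x' - G x) \<le> (lam + 2 * tau * D ^ k / fact k) * norm (x' - x))"
proof (intro exI[of _ "\<lambda>x. adjoint (taylor_y_derivative yhat y x) 1"] conjI ballI)
  let ?G = "\<lambda>x. adjoint (taylor_y_derivative yhat y x) 1"
  have gradient: "taylor_y_derivative yhat y x u = ?G x \<bullet> u" if "x \<in> X" for x u
    using adjoint_works[OF has_derivative_linear[OF has_derivative_taylor_y[OF yhat y that]], of u 1]
    by (simp add: inner_commute)
  show "((\<lambda>x'. taylor_y Dy k yhat x' y) has_derivative (\<lambda>u. ?G x \<bullet> u)) (at x within X)" if "x \<in> X" for x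
  proof -
    have "taylor_y_derivative yhat y x = (\<lambda>u. ?G x \<bullet> u)"
      by (rule ext) (rule gradient[OF that])
    then show ?thesis
      using has_derivative_taylor_y[OF yhat y that] by simp
  qed
  fix x x' assume x: "x \<in> X" and x': "x' \<in> X"
  have "2 * tau * norm (y - yhat) ^ k / fact k \<le> 2 * tau * D ^ k / fact k"
    using D tau_nonneg by (intro divide_right_mono mult_left_mono power_mono) auto
  then have "\<bar>(?G x' - ?G x) \<bullet> v\<bar> \<le> (lam + 2 * tau * D ^ k / fact k) * norm (x' - x) * norm v" for v
    using taylor_y_derivative_Lipschitz[OF yhat y x x', of v] gradient[OF x] gradient[OF x']
    by (smt (verit) inner_diff_left mult_right_mono norm_ge_zero)
  then show "norm (?G x' - ?G x) \<le> (lam + 2 * tau * D ^ k / fact k) * norm (x' - x)"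
    by (intro norm_le_if_inner_bounded) (simp add: ac_simps)
qed

end

theorem lemma3:
  fixes f :: "'a::euclidean_space \<Rightarrow> 'b::euclidean_space \<Rightarrow> real"
    and X :: "'a set" and Y :: "'b set"
    and gx :: "'a \<Rightarrow> 'b \<Rightarrow> 'a"
    and Dy :: "nat \<Rightarrow> 'a \<Rightarrow> 'b \<Rightarrow> 'b list \<Rightarrow> real"
    and Dxy :: "'a \<Rightarrow> 'b \<Rightarrow> 'a \<Rightarrow> 'b list \<Rightarrow> real"
    and k :: nat and lam tau D :: real and mu :: ereal
  assumes X: "convex X" "interior X \<noteq> {}"
    and Y: "convex Y" "interior Y \<noteq> {}" "compact Y"
    and D: "diameter Y \<le> D"
    \<comment> \<open>gradient in x of f exists on X \<times> Y and satisfies the joint Lipschitz bound\<close>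
    and gx: "\<forall>x\<in>X. \<forall>y\<in>Y. ((\<lambda>x'. f x' y) has_derivative (\<lambda>u. gx x y \<bullet> u)) (at x within X)"
    and gx_lip: "\<forall>x\<in>X. \<forall>x'\<in>X. \<forall>y\<in>Y. \<forall>y'\<in>Y.
        ereal (norm (gx x' y' - gx x y)) \<le> ereal lam * ereal (norm (x' - x)) + mu * ereal (norm (y' - y))"
    \<comment> \<open>Dy j x y is the j-th y-derivative tensor of f at (x,y)\<close>
    and Dy0: "\<forall>x y vs. Dy 0 x y vs = f x y"
    and Dy: "k \<ge> 1 \<Longrightarrow> \<forall>j<k. \<forall>x\<in>X. \<forall>y\<in>Y. \<forall>vs.
        ((\<lambda>y'. Dy j x y' vs) has_derivative (\<lambda>v. Dy (Suc j) x y (v # vs))) (at y within Y)"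
    \<comment> \<open>Dxy x y is the mixed derivative tensor with one x-slot and k y-slots\<close>
    and Dxy: "k \<ge> 1 \<Longrightarrow> \<forall>x\<in>X. \<forall>y\<in>Y. \<forall>vs.
        ((\<lambda>x'. Dy k x' y vs) has_derivative (\<lambda>u. Dxy x y u vs)) (at x within X)"
    and Dxy_lip: "k \<ge> 1 \<Longrightarrow> \<forall>x\<in>X. \<forall>x'\<in>X. \<forall>y\<in>Y.
        mixed_opnorm k (\<lambda>u vs. Dxy x' y u vs - Dxy x y u vs) \<le> tau * norm (x' - x)"
    and meas: "k \<ge> 1 \<Longrightarrow>
        {(x, y). x \<in> X \<and> y \<in> no_xx_deriv Dxy X Y x} \<in> sets (lebesgue :: ('a \<times> 'b) measure)"
    and cont: "k \<ge> 1 \<Longrightarrow> \<forall>x\<in>X. \<forall>vs. continuous_on Y (\<lambda>y. Dy k x y vs)"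
  shows "\<forall>yhat\<in>Y. \<forall>y\<in>Y. \<exists>G :: 'a \<Rightarrow> 'a.
           (\<forall>x\<in>X. ((\<lambda>x'. taylor_y Dy k yhat x' y) has_derivative (\<lambda>u. G x \<bullet> u)) (at x within X)) \<and>
           (\<forall>x\<in>X. \<forall>x'\<in>X. norm (G x' - G x)
               \<le> (lam + (if k \<ge> 1 then 2 * tau * D ^ k / fact k else 0)) * norm (x' - x))"
proof (intro ballI)
  fix yhat y assume yhat: "yhat \<in> Y" and y: "y \<in> Y"
  have gx_Lipschitz: "norm (gx x' z - gx x z) \<le> lam * norm (x' - x)"
    if "x \<in> X" "x' \<in> X" "z \<in> Y" for x x' z
    using gx_lip[rule_format, OF that(1,2,3,3)] by (simp add: zero_ereal_def[symmetric])
  show "\<exists>G. (\<forall>x\<in>X. ((\<lambda>x'. taylor_y Dy k yhat x' y) has_derivative (\<lambda>u. G x \<bullet> u)) (at x within X)) \<and>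
      (\<forall>x\<in>X. \<forall>x'\<in>X. norm (G x' - G x)
        \<le> (lam + (if k \<ge> 1 then 2 * tau * D ^ k / fact k else 0)) * norm (x' - x))"
  proof (cases "k = 0")
    case True
    then show ?thesis
      using gx yhat gx_Lipschitz
      by (intro exI[of _ "\<lambda>x. gx x yhat"]) (simp add: taylor_y_def Dy0)
  next
    case False
    then have k: "1 \<le> k"
      by simp
    interpret T: partial_taylor f X Y gx Dy Dxy k lam tau
      by unfold_locales (use X Y k gx gx_Lipschitz Dy0 Dy[OF k] Dxy[OF k] Dxy_lip[OF k] cont[OF k] in simp_all)
    have "norm (y - yhat) \<le> D"
      using diameter_bounded_bound[OF compact_imp_bounded[OF Y(3)] y yhat] D by (simp add: dist_norm)
    then show ?thesis
      using T.taylor_y_gradient_Lipschitz[OF yhat y] False by simp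
  qed
qed

end
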